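(* Let $|\psi_1\rangle,\dots,|\psi_4\rangle$ be pure qubit states with $\langle\psi_1|\psi_3\rangle=\langle\psi_2|\psi_4\rangle=0$, and consider the ensemble $\{1/4,\rho_x=|\psi_x\rangle\langle\psi_x|\}_{x=1}^4$. Then its symmetry operator is $K=I/4$ (the same for all such choices of the two orthogonal pairs), so all such sets lie in the same equivalence class, and $P_{\mathrm{guess}}=\mathrm{tr}[K]=1/2$.
   Context: For an ensemble $\{q_x,\rho_x\}$, the symmetry operator is the (unique) Hermitian $K$ for which there exist $r_x\ge0$, density operators $\sigma_x$ and a POVM $\{M_x\}$ with $K=q_x\rho_x+r_x\sigma_x$ and $r_x\mathrm{tr}[M_x\sigma_x]=0$ for all $x$; it satisfies $\mathrm{tr}[K]=P_{\mathrm{guess}}=\max_{\text{POVMs}}\sum_x q_x\mathrm{tr}[M_x\rho_x]$. Two ensembles are equivalent (same equivalence class) if their symmetry operators are unitarily equivalent. *)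

theory Defs
  imports "Jordan_Normal_Form.Schur_Decomposition"
begin

definition braket :: "complex vec \<Rightarrow> complex vec \<Rightarrow> complex" where
  "braket a b = (\<Sum>i<dim_vec a. cnj (a $ i) * b $ i)"

definition ketbra :: "complex vec \<Rightarrow> complex mat" where
  "ketbra v = mat (dim_vec v) (dim_vec v) (\<lambda>(i,j). v $ i * cnj (v $ j))"

definition trace :: "complex mat \<Rightarrow> complex" where
  "trace A = (\<Sum>i<dim_row A. A $$ (i,i))"

definition hermitian :: "complex mat \<Rightarrow> bool" where
  "hermitian A \<longleftrightarrow> mat_adjoint A = A"

definition psd :: "nat \<Rightarrow> complex mat \<Rightarrow> bool" where
  "psd n A \<longleftrightarrow> A \<in> carrier_mat n n \<and> hermitian A \<and>
     (\<forall>v \<in> carrier_vec n. 0 \<le> Re (braket v (A *\<^sub>v v)))"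

definition density :: "nat \<Rightarrow> complex mat \<Rightarrow> bool" where
  "density n A \<longleftrightarrow> psd n A \<and> trace A = 1"

definition unitary :: "nat \<Rightarrow> complex mat \<Rightarrow> bool" where
  "unitary n U \<longleftrightarrow> U \<in> carrier_mat n n \<and> U * mat_adjoint U = 1\<^sub>m n \<and> mat_adjoint U * U = 1\<^sub>m n"

definition is_povm :: "nat \<Rightarrow> 'x set \<Rightarrow> ('x \<Rightarrow> complex mat) \<Rightarrow> bool" where
  "is_povm n X M \<longleftrightarrow> (\<forall>x\<in>X. psd n (M x)) \<and>
     mat n n (\<lambda>ij. \<Sum>x\<in>X. M x $$ ij) = 1\<^sub>m n"

definition is_symm_op :: "nat \<Rightarrow> 'x set \<Rightarrow> ('x \<Rightarrow> real) \<Rightarrow> ('x \<Rightarrow> complex mat) \<Rightarrow> complex mat \<Rightarrow> bool" where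
  "is_symm_op n X q \<rho> K \<longleftrightarrow> K \<in> carrier_mat n n \<and> hermitian K \<and>
     (\<exists>r \<sigma> M. is_povm n X M \<and>
        (\<forall>x\<in>X. r x \<ge> 0 \<and> density n (\<sigma> x) \<and>
           K = complex_of_real (q x) \<cdot>\<^sub>m \<rho> x + complex_of_real (r x) \<cdot>\<^sub>m \<sigma> x \<and>
           complex_of_real (r x) * trace (M x * \<sigma> x) = 0))"

definition symm_op :: "nat \<Rightarrow> 'x set \<Rightarrow> ('x \<Rightarrow> real) \<Rightarrow> ('x \<Rightarrow> complex mat) \<Rightarrow> complex mat" where
  "symm_op n X q \<rho> = (THE K. is_symm_op n X q \<rho> K)"

definition pguess :: "nat \<Rightarrow> 'x set \<Rightarrow> ('x \<Rightarrow> real) \<Rightarrow> ('x \<Rightarrow> complex mat) \<Rightarrow> real" where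
  "pguess n X q \<rho> = Sup {Re (\<Sum>x\<in>X. complex_of_real (q x) * trace (M x * \<rho> x)) | M. is_povm n X M}"

definition ens_equiv :: "nat \<Rightarrow> 'x set \<Rightarrow> ('x \<Rightarrow> real) \<Rightarrow> ('x \<Rightarrow> complex mat) \<Rightarrow>
    'y set \<Rightarrow> ('y \<Rightarrow> real) \<Rightarrow> ('y \<Rightarrow> complex mat) \<Rightarrow> bool" where
  "ens_equiv n X q \<rho> Y p \<tau> \<longleftrightarrow>
     (\<exists>U. unitary n U \<and> symm_op n Y p \<tau> = U * symm_op n X q \<rho> * mat_adjoint U)"

end

theory Submission
  imports Defs
begin

text \<open>Since \<open>\<psi>\<^sub>1, \<psi>\<^sub>3\<close> is an orthonormal basis of \<open>\<complex>\<^sup>2\<close>, \<open>|\<psi>\<^sub>1\<rangle>\<langle>\<psi>\<^sub>1| + |\<psi>\<^sub>3\<rangle>\<langle>\<psi>\<^sub>3| = I\<close>,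
  and likewise for \<open>\<psi>\<^sub>2, \<psi>\<^sub>4\<close>. Hence \<open>tr[N \<rho>\<^sub>x] \<le> tr N\<close> for every positive \<open>N\<close>, and the success
  probability of any POVM is at most \<open>(1/4) \<Sum>\<^sub>x tr N\<^sub>x = 1/2\<close>. The operator \<open>I/4 = \<rho>\<^sub>x/4 + \<rho>\<^sub>x\<^sub>'/4\<close>,
  where \<open>x'\<close> is the orthogonal partner of \<open>x\<close>, is a symmetry operator, witnessed by the
  measurement in the basis \<open>\<psi>\<^sub>1, \<psi>\<^sub>3\<close>. Conversely, the trace of any symmetry operator \<open>K\<close> is the
  success probability of its POVM, so \<open>tr K \<le> 1/2\<close>; writing \<open>K = \<rho>\<^sub>x/4 + P\<^sub>x\<close> with \<open>P\<^sub>x \<ge> 0\<close>,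
  \<open>tr K = \<langle>\<psi>\<^sub>1|K|\<psi>\<^sub>1\<rangle> + \<langle>\<psi>\<^sub>3|K|\<psi>\<^sub>3\<rangle> = 1/2 + \<langle>\<psi>\<^sub>1|P\<^sub>1|\<psi>\<^sub>1\<rangle> + \<langle>\<psi>\<^sub>3|P\<^sub>3|\<psi>\<^sub>3\<rangle>\<close> forces
  \<open>P\<^sub>1\<psi>\<^sub>1 = P\<^sub>3\<psi>\<^sub>3 = 0\<close>, so \<open>K\<close> acts as \<open>1/4\<close> on a basis.\<close>

lemma mat_adjoint_index:
  "A \<in> carrier_mat n m \<Longrightarrow> i < m \<Longrightarrow> j < n \<Longrightarrow> mat_adjoint A $$ (i,j) = cnj (A $$ (j,i))"
  unfolding mat_adjoint_def by (simp add: mat_of_rows_def)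

lemma mat_adjoint_carrier: "A \<in> carrier_mat n m \<Longrightarrow> mat_adjoint A \<in> carrier_mat m n"
  unfolding mat_adjoint_def by (simp add: mat_of_rows_def)

lemma hermitian_iff_index:
  assumes A: "A \<in> carrier_mat n n"
  shows "hermitian A \<longleftrightarrow> (\<forall>i<n. \<forall>j<n. A $$ (i,j) = cnj (A $$ (j,i)))"
proof
  assume "hermitian A"
  then have "A $$ (i,j) = cnj (A $$ (j,i))" if "i < n" "j < n" for i j
    using mat_adjoint_index[OF A that] unfolding hermitian_def by argo
  then show "\<forall>i<n. \<forall>j<n. A $$ (i,j) = cnj (A $$ (j,i))" by blast
next
  assume H: "\<forall>i<n. \<forall>j<n. A $$ (i,j) = cnj (A $$ (j,i))"
  have "mat_adjoint A $$ (i,j) = A $$ (i,j)" if "i < n" "j < n" for i j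
    using mat_adjoint_index[OF A that] H that by (metis complex_cnj_cnj)
  then have "mat_adjoint A = A"
    using A mat_adjoint_carrier[OF A] by (intro eq_matI) auto
  then show "hermitian A" unfolding hermitian_def .
qed

lemma hermitian_cnj_index:
  assumes "A \<in> carrier_mat n n" "hermitian A" "i < n" "j < n"
  shows "cnj (A $$ (i,j)) = A $$ (j,i)"
  using assms hermitian_iff_index by (metis complex_cnj_cnj)

lemma braket_carrier: "v \<in> carrier_vec n \<Longrightarrow> braket v w = (\<Sum>i<n. cnj (v $ i) * w $ i)"
  by (simp add: braket_def)

lemma braket_cnj_swap:
  "v \<in> carrier_vec n \<Longrightarrow> w \<in> carrier_vec n \<Longrightarrow> braket w v = cnj (braket v w)"
  by (simp add: braket_carrier mult.commute)

lemma braket_add_right: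
  "u \<in> carrier_vec n \<Longrightarrow> v \<in> carrier_vec n \<Longrightarrow> w \<in> carrier_vec n \<Longrightarrow>
    braket u (v + w) = braket u v + braket u w"
  by (simp add: braket_carrier distrib_left sum.distrib)

lemma braket_smult_right:
  "u \<in> carrier_vec n \<Longrightarrow> v \<in> carrier_vec n \<Longrightarrow> braket u (c \<cdot>\<^sub>v v) = c * braket u v"
  by (simp add: braket_carrier sum_distrib_left algebra_simps)

lemma braket_add_left:
  "u \<in> carrier_vec n \<Longrightarrow> v \<in> carrier_vec n \<Longrightarrow> w \<in> carrier_vec n \<Longrightarrow>
    braket (u + v) w = braket u w + braket v w"
  by (simp add: braket_carrier[of _ n] distrib_right sum.distrib)

lemma braket_smult_left:
  "u \<in> carrier_vec n \<Longrightarrow> w \<in> carrier_vec n \<Longrightarrow> braket (c \<cdot>\<^sub>v u) w = cnj c * braket u w"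
  by (simp add: braket_carrier sum_distrib_left algebra_simps)

lemma Re_braket_self: "w \<in> carrier_vec n \<Longrightarrow> Re (braket w w) = (\<Sum>i<n. (cmod (w $ i))\<^sup>2)"
proof -
  have "Re (cnj z * z) = (cmod z)\<^sup>2" for z
    by (metis Re_complex_of_real complex_norm_square mult.commute of_real_power)
  then show "w \<in> carrier_vec n \<Longrightarrow> ?thesis" by (simp add: braket_carrier)
qed

lemma Re_braket_self_eq_0_iff:
  assumes "w \<in> carrier_vec n"
  shows "Re (braket w w) = 0 \<longleftrightarrow> w = 0\<^sub>v n"
proof -
  have "Re (braket w w) = 0 \<longleftrightarrow> (\<forall>i<n. w $ i = 0)"
    using Re_braket_self[OF assms] by (auto simp: sum_nonneg_eq_0_iff)
  also have "\<dots> \<longleftrightarrow> w = 0\<^sub>v n" using assms by (auto intro!: eq_vecI)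
  finally show ?thesis .
qed

lemma index_mult_mat_vec_carrier:
  "A \<in> carrier_mat n m \<Longrightarrow> v \<in> carrier_vec m \<Longrightarrow> i < n \<Longrightarrow> (A *\<^sub>v v) $ i = (\<Sum>j<m. A $$ (i,j) * v $ j)"
  by (auto simp: scalar_prod_def atLeast0LessThan)

lemma index_mult_mat_carrier:
  "A \<in> carrier_mat n m \<Longrightarrow> B \<in> carrier_mat m k \<Longrightarrow> i < n \<Longrightarrow> j < k \<Longrightarrow>
    (A * B) $$ (i,j) = (\<Sum>l<m. A $$ (i,l) * B $$ (l,j))"
  by (simp add: scalar_prod_def atLeast0LessThan)

lemma hermitian_braket_swap:
  assumes P: "P \<in> carrier_mat n n" "hermitian P" and v: "v \<in> carrier_vec n" and w: "w \<in> carrier_vec n"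
  shows "braket v (P *\<^sub>v w) = cnj (braket w (P *\<^sub>v v))"
proof -
  have "cnj (braket w (P *\<^sub>v v)) = (\<Sum>i<n. \<Sum>j<n. w $ i * P $$ (j,i) * cnj (v $ j))"
    using P v w by (simp add: braket_carrier index_mult_mat_vec_carrier[OF P(1)] sum_distrib_left
        hermitian_cnj_index[OF P] mult.assoc del: index_mult_mat_vec)
  also have "\<dots> = (\<Sum>j<n. \<Sum>i<n. cnj (v $ j) * (P $$ (j,i) * w $ i))"
    by (subst sum.swap) (simp add: mult.commute mult.left_commute)
  also have "\<dots> = braket v (P *\<^sub>v w)"
    using P v w by (simp add: braket_carrier index_mult_mat_vec_carrier[OF P(1)] sum_distrib_left
        del: index_mult_mat_vec)
  finally show ?thesis ..
qed

lemma smult_mat_mult_vec: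
  assumes "A \<in> carrier_mat n m" "v \<in> carrier_vec m"
  shows "(c \<cdot>\<^sub>m A) *\<^sub>v v = c \<cdot>\<^sub>v (A *\<^sub>v v)"
  using assms by (intro eq_vecI) (auto simp: index_mult_mat_vec_carrier[of _ n m] sum_distrib_left ac_simps
      simp del: index_mult_mat_vec)

lemma ketbra_dim [simp]: "dim_row (ketbra v) = dim_vec v" "dim_col (ketbra v) = dim_vec v"
  by (simp_all add: ketbra_def)

lemma ketbra_carrier: "v \<in> carrier_vec n \<Longrightarrow> ketbra v \<in> carrier_mat n n"
  by (simp add: ketbra_def)

lemma ketbra_index: "v \<in> carrier_vec n \<Longrightarrow> i < n \<Longrightarrow> j < n \<Longrightarrow> ketbra v $$ (i,j) = v $ i * cnj (v $ j)"
  by (simp add: ketbra_def)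

lemma ketbra_mult_vec:
  assumes "v \<in> carrier_vec n" "u \<in> carrier_vec n"
  shows "ketbra v *\<^sub>v u = braket v u \<cdot>\<^sub>v v"
  using assms ketbra_carrier[OF assms(1)]
  by (intro eq_vecI) (auto simp: index_mult_mat_vec_carrier[OF ketbra_carrier[OF assms(1)] assms(2)]
      ketbra_index braket_carrier sum_distrib_left sum_distrib_right ac_simps simp del: index_mult_mat_vec)

lemma trace_carrier: "A \<in> carrier_mat n n \<Longrightarrow> trace A = (\<Sum>i<n. A $$ (i,i))"
  by (simp add: trace_def)

lemma trace_mult_ketbra:
  assumes A: "A \<in> carrier_mat n n" and v: "v \<in> carrier_vec n"
  shows "trace (A * ketbra v) = braket v (A *\<^sub>v v)"
  using assms ketbra_carrier[OF v]
  by (simp add: trace_carrier[of _ n] braket_carrier index_mult_mat_vec_carrier scalar_prod_def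
      atLeast0LessThan ketbra_index sum_distrib_left mult.commute mult.left_commute)

lemma trace_add: "A \<in> carrier_mat n n \<Longrightarrow> B \<in> carrier_mat n n \<Longrightarrow> trace (A + B) = trace A + trace B"
  by (simp add: trace_carrier[of _ n] sum.distrib)

lemma trace_smult: "A \<in> carrier_mat n n \<Longrightarrow> trace (c \<cdot>\<^sub>m A) = c * trace A"
  by (simp add: trace_carrier[of _ n] sum_distrib_left)

lemma trace_ketbra_mult_ketbra:
  assumes u: "u \<in> carrier_vec n" and v: "v \<in> carrier_vec n"
  shows "trace (ketbra u * ketbra v) = braket u v * braket v u"
  using u v by (simp add: trace_mult_ketbra[OF ketbra_carrier[OF u] v] ketbra_mult_vec braket_smult_right)

lemma mult_ketbra_eigenvector:
  assumes A: "A \<in> carrier_mat n n" and u: "u \<in> carrier_vec n" and eig: "A *\<^sub>v u = c \<cdot>\<^sub>v u"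
  shows "A * ketbra u = c \<cdot>\<^sub>m ketbra u"
proof (rule eq_matI)
  fix i j assume "i < dim_row (c \<cdot>\<^sub>m ketbra u)" and "j < dim_col (c \<cdot>\<^sub>m ketbra u)"
  then have ij: "i < n" "j < n" using u by (simp_all add: ketbra_def)
  have "(A * ketbra u) $$ (i,j) = (\<Sum>l<n. A $$ (i,l) * u $ l) * cnj (u $ j)"
    unfolding index_mult_mat_carrier[OF A ketbra_carrier[OF u] ij] sum_distrib_right
    by (rule sum.cong) (simp_all add: ketbra_index[OF u] ij mult.assoc)
  also have "\<dots> = (A *\<^sub>v u) $ i * cnj (u $ j)"
    by (simp only: index_mult_mat_vec_carrier[OF A u ij(1)])
  also have "\<dots> = c * u $ i * cnj (u $ j)"
    using eig u ij by simp
  also have "\<dots> = (c \<cdot>\<^sub>m ketbra u) $$ (i,j)"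
    using ij by (simp add: ketbra_def carrier_vecD[OF u])
  finally show "(A * ketbra u) $$ (i,j) = (c \<cdot>\<^sub>m ketbra u) $$ (i,j)" .
qed (use A u in \<open>simp_all add: ketbra_def carrier_vecD[OF u]\<close>)

lemma smult_ketbra_add_mult_vec:
  assumes v: "v \<in> carrier_vec n" and vv: "braket v v = 1" and P: "P \<in> carrier_mat n n"
  shows "(c \<cdot>\<^sub>m ketbra v + P) *\<^sub>v v = c \<cdot>\<^sub>v v + P *\<^sub>v v"
proof -
  have "(c \<cdot>\<^sub>m ketbra v) *\<^sub>v v = c \<cdot>\<^sub>v v"
    using v vv by (simp add: smult_mat_mult_vec[OF ketbra_carrier[OF v] v] ketbra_mult_vec)
  then show ?thesis
    using add_mult_distrib_mat_vec[OF smult_carrier_mat[OF ketbra_carrier[OF v]] P v] by simp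
qed

lemma psd_ketbra: assumes v: "v \<in> carrier_vec n" shows "psd n (ketbra v)"
  unfolding psd_def
proof (intro conjI ballI)
  show "ketbra v \<in> carrier_mat n n" using ketbra_carrier[OF v] .
  show "hermitian (ketbra v)"
    using v by (simp add: hermitian_iff_index[OF ketbra_carrier[OF v]] ketbra_index)
  fix u :: "complex vec" assume u: "u \<in> carrier_vec n"
  have "braket u (ketbra v *\<^sub>v u) = braket v u * cnj (braket v u)"
    using u v by (simp add: ketbra_mult_vec braket_smult_right braket_cnj_swap[OF v u])
  then show "0 \<le> Re (braket u (ketbra v *\<^sub>v u))"
    by (simp add: complex_mult_cnj)
qed

lemma density_ketbra:
  assumes v: "v \<in> carrier_vec n" and "braket v v = 1"
  shows "density n (ketbra v)"
  using assms psd_ketbra[OF v]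
  by (simp add: density_def trace_carrier[OF ketbra_carrier[OF v]] braket_carrier ketbra_index mult.commute)

lemma psd_smult:
  assumes P: "psd n P" and r: "r \<ge> 0"
  shows "psd n (complex_of_real r \<cdot>\<^sub>m P)"
proof -
  have Pc: "P \<in> carrier_mat n n" and h: "hermitian P"
    and nonneg: "\<And>u. u \<in> carrier_vec n \<Longrightarrow> 0 \<le> Re (braket u (P *\<^sub>v u))"
    using P unfolding psd_def by auto
  have "braket u ((complex_of_real r \<cdot>\<^sub>m P) *\<^sub>v u) = complex_of_real r * braket u (P *\<^sub>v u)"
    if u: "u \<in> carrier_vec n" for u
    using Pc u by (simp add: smult_mat_mult_vec[OF Pc u] braket_smult_right)
  moreover have "hermitian (complex_of_real r \<cdot>\<^sub>m P)"
    using Pc by (auto simp: hermitian_iff_index[OF smult_carrier_mat[OF Pc]] hermitian_cnj_index[OF Pc h])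
  ultimately show ?thesis
    using Pc nonneg r by (auto simp: psd_def)
qed

lemma psd_zero: "psd n (0\<^sub>m n n)"
  by (auto simp: psd_def hermitian_iff_index[OF zero_carrier_mat] braket_carrier)

lemma nonneg_quadratic_imp_linear_coeff_zero:
  fixes a b c :: real
  assumes f: "\<And>t. 0 \<le> b + 2*t*a + t\<^sup>2*c" and b: "b \<le> 0" and c: "c \<ge> 0"
  shows "a = 0"
proof -
  define t where "t = - a / (c+1)"
  have cp: "c + 1 > 0" using c by simp
  have "0 \<le> (b + 2*t*a + t\<^sup>2*c) * (c+1)\<^sup>2" using f[of t] cp by simp
  also have "\<dots> = b*(c+1)\<^sup>2 + 2*a*(t*(c+1))*(c+1) + c*(t*(c+1))\<^sup>2"
    by (simp add: algebra_simps power2_eq_square)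
  also have "t*(c+1) = -a" unfolding t_def using cp by simp
  also have "b*(c+1)\<^sup>2 + 2*a*(-a)*(c+1) + c*(-a)\<^sup>2 = b*(c+1)\<^sup>2 - a\<^sup>2*(c+2)"
    by (simp add: algebra_simps power2_eq_square)
  finally have "a\<^sup>2 * (c+2) \<le> b*(c+1)\<^sup>2" by simp
  also have "\<dots> \<le> 0" using b by (simp add: mult_nonpos_nonneg)
  finally have "a\<^sup>2 * (c+2) \<le> 0" .
  then have "a\<^sup>2 \<le> 0" using c by (simp add: mult_le_0_iff)
  then show "a = 0" by simp
qed

lemma psd_kernel:
  assumes P: "psd n P" and v: "v \<in> carrier_vec n" and le: "Re (braket v (P *\<^sub>v v)) \<le> 0"
  shows "P *\<^sub>v v = 0\<^sub>v n"
proof -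
  have Pc: "P \<in> carrier_mat n n" and h: "hermitian P"
    and nonneg: "\<And>u. u \<in> carrier_vec n \<Longrightarrow> 0 \<le> Re (braket u (P *\<^sub>v u))"
    using P unfolding psd_def by auto
  define w where "w = P *\<^sub>v v"
  have w: "w \<in> carrier_vec n" unfolding w_def using Pc v by simp
  have swap: "braket v (P *\<^sub>v w) = cnj (braket w w)"
    using hermitian_braket_swap[OF Pc h v w] by (simp add: w_def)
  \<comment> \<open>\<open>t \<mapsto> \<langle>v + t w|P|v + t w\<rangle>\<close> is a nonnegative quadratic with constant term \<open>\<le> 0\<close>,
    so its linear coefficient \<open>2\<langle>w|w\<rangle>\<close> vanishes\<close>
  have "0 \<le> Re (braket v (P *\<^sub>v v)) + 2*t*Re (braket w w) + t\<^sup>2 * Re (braket w (P *\<^sub>v w))" for t :: real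
  proof -
    define u where "u = v + complex_of_real t \<cdot>\<^sub>v w"
    have Pw: "P *\<^sub>v w \<in> carrier_vec n" using Pc w by simp
    have "P *\<^sub>v u = P *\<^sub>v v + complex_of_real t \<cdot>\<^sub>v (P *\<^sub>v w)"
      unfolding u_def using Pc v w by (simp add: mult_add_distrib_mat_vec mult_mat_vec)
    then have "braket u (P *\<^sub>v u) = braket v (P *\<^sub>v v) + complex_of_real t * braket v (P *\<^sub>v w)
        + complex_of_real t * braket w w + complex_of_real t * complex_of_real t * braket w (P *\<^sub>v w)"
      unfolding u_def using v w Pw
      by (simp add: braket_add_left braket_add_right braket_smult_left braket_smult_right algebra_simps
          flip: w_def)
    then have "Re (braket u (P *\<^sub>v u))
        = Re (braket v (P *\<^sub>v v)) + 2*t*Re (braket w w) + t\<^sup>2 * Re (braket w (P *\<^sub>v w))"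
      by (simp add: swap power2_eq_square)
    moreover have "u \<in> carrier_vec n" unfolding u_def using v w by simp
    ultimately show ?thesis using nonneg by metis
  qed
  then have "Re (braket w w) = 0"
    using nonneg_quadratic_imp_linear_coeff_zero le nonneg[OF w] by blast
  then show ?thesis using Re_braket_self_eq_0_iff[OF w] by (simp add: w_def)
qed

lemma povm_carrier: "is_povm n X M \<Longrightarrow> x \<in> X \<Longrightarrow> M x \<in> carrier_mat n n"
  by (simp add: is_povm_def psd_def)

lemma povm_sum_trace_mult:
  assumes M: "is_povm n X M" and K: "K \<in> carrier_mat n n"
  shows "(\<Sum>x\<in>X. trace (M x * K)) = trace K"
proof -
  have sum_one: "(\<Sum>x\<in>X. M x $$ (i,j)) = (if i = j then 1 else 0)" if "i < n" "j < n" for i j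
    using arg_cong[OF M[unfolded is_povm_def, THEN conjunct2], of "\<lambda>A. A $$ (i,j)"] that by simp
  have "trace (M x * K) = (\<Sum>i<n. \<Sum>j<n. M x $$ (i,j) * K $$ (j,i))" if "x \<in> X" for x
    using povm_carrier[OF M that] K
    by (simp add: trace_carrier[OF mult_carrier_mat] index_mult_mat_carrier del: index_mult_mat)
  then have "(\<Sum>x\<in>X. trace (M x * K)) = (\<Sum>x\<in>X. \<Sum>i<n. \<Sum>j<n. M x $$ (i,j) * K $$ (j,i))"
    by (rule sum.cong[OF refl])
  also have "\<dots> = (\<Sum>i<n. \<Sum>j<n. (\<Sum>x\<in>X. M x $$ (i,j)) * K $$ (j,i))"
    by (simp add: sum_distrib_right sum.swap[of _ X])
  also have "\<dots> = (\<Sum>i<n. \<Sum>j<n. if i = j then K $$ (j,i) else 0)"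
    by (intro sum.cong refl) (simp add: sum_one)
  also have "\<dots> = (\<Sum>i<n. K $$ (i,i))"
    by simp
  also have "\<dots> = trace K" using K by (simp add: trace_carrier)
  finally show ?thesis .
qed

lemma is_symm_op_trace:
  assumes K: "is_symm_op n X q \<rho> K" and \<rho>: "\<And>x. x \<in> X \<Longrightarrow> \<rho> x \<in> carrier_mat n n"
  shows "\<exists>M. is_povm n X M \<and> trace K = (\<Sum>x\<in>X. complex_of_real (q x) * trace (M x * \<rho> x))"
proof -
  obtain r \<sigma> M where M: "is_povm n X M" and Kc: "K \<in> carrier_mat n n"
    and decomp: "\<And>x. x \<in> X \<Longrightarrow> density n (\<sigma> x) \<and>
        K = complex_of_real (q x) \<cdot>\<^sub>m \<rho> x + complex_of_real (r x) \<cdot>\<^sub>m \<sigma> x \<and>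
        complex_of_real (r x) * trace (M x * \<sigma> x) = 0"
    using K unfolding is_symm_op_def by blast
  \<comment> \<open>the condition \<open>r\<^sub>x tr[M\<^sub>x \<sigma>\<^sub>x] = 0\<close> removes the \<open>\<sigma>\<close>-part of \<open>tr[M\<^sub>x K]\<close>\<close>
  have "trace (M x * K) = complex_of_real (q x) * trace (M x * \<rho> x)" if x: "x \<in> X" for x
  proof -
    have \<sigma>: "\<sigma> x \<in> carrier_mat n n" using decomp[OF x] by (simp add: density_def psd_def)
    have Mx: "M x \<in> carrier_mat n n" using povm_carrier[OF M x] .
    have "M x * K = complex_of_real (q x) \<cdot>\<^sub>m (M x * \<rho> x) + complex_of_real (r x) \<cdot>\<^sub>m (M x * \<sigma> x)"
      using decomp[OF x] mult_add_distrib_mat[OF Mx smult_carrier_mat[OF \<rho>[OF x]] smult_carrier_mat[OF \<sigma>]]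
      by (simp add: mult_smult_distrib[OF Mx \<rho>[OF x]] mult_smult_distrib[OF Mx \<sigma>])
    then show ?thesis
      using decomp[OF x] Mx \<rho>[OF x] \<sigma> by (simp add: trace_add[of _ n] trace_smult[of _ n])
  qed
  then show ?thesis
    using M povm_sum_trace_mult[OF M Kc] by (metis (no_types, lifting) sum.cong)
qed

lemma is_symm_op_decomp:
  assumes "is_symm_op n X q \<rho> K" and "x \<in> X"
  shows "\<exists>P. psd n P \<and> K = complex_of_real (q x) \<cdot>\<^sub>m \<rho> x + P"
  using assms unfolding is_symm_op_def density_def by (metis psd_smult)

definition qubit_onb :: "complex vec \<Rightarrow> complex vec \<Rightarrow> bool" where
  "qubit_onb u w \<longleftrightarrow> u \<in> carrier_vec 2 \<and> w \<in> carrier_vec 2 \<and>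
     braket u u = 1 \<and> braket w w = 1 \<and> braket u w = 0"

lemma qubit_onb_sym: "qubit_onb u w \<Longrightarrow> qubit_onb w u"
  unfolding qubit_onb_def by (metis braket_cnj_swap complex_cnj_zero)

lemma sum_lessThan_2: "(\<Sum>l<2. f l) = f 0 + f (1::nat)"
  by (simp add: numeral_2_eq_2)

lemma qubit_onb_completeness:
  assumes "qubit_onb u w"
  shows "ketbra u + ketbra w = 1\<^sub>m 2"
proof -
  have u: "u \<in> carrier_vec 2" and w: "w \<in> carrier_vec 2"
    and uu: "braket u u = 1" and ww: "braket w w = 1" and uw: "braket u w = 0" and wu: "braket w u = 0"
    using assms qubit_onb_sym[OF assms] unfolding qubit_onb_def by auto
  define f where "f i = (if i = 0 then u else w)" for i :: nat
  have f: "f i \<in> carrier_vec 2" for i using u w by (simp add: f_def)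
  have f_orth: "braket (f i) (f j) = 1\<^sub>m 2 $$ (i,j)" if "i < 2" "j < 2" for i j
    using that uu ww uw wu by (auto simp: f_def less_2_cases_iff)
  define U where "U = mat 2 2 (\<lambda>(i,j). f j $ i)"
  define V where "V = mat 2 2 (\<lambda>(i,j). cnj (f i $ j))"
  have U: "U \<in> carrier_mat 2 2" and V: "V \<in> carrier_mat 2 2" by (simp_all add: U_def V_def)
  \<comment> \<open>\<open>V = U\<^sup>\<dagger>\<close> is a left inverse of \<open>U = (u w)\<close>, hence a right inverse: \<open>U U\<^sup>\<dagger> = |u\<rangle>\<langle>u| + |w\<rangle>\<langle>w|\<close>\<close>
  have "V * U = 1\<^sub>m 2"
  proof (rule eq_matI)
    fix i j assume "i < dim_row (1\<^sub>m 2 :: complex mat)" "j < dim_col (1\<^sub>m 2 :: complex mat)"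
    then have ij: "i < 2" "j < 2" by simp_all
    have "(V * U) $$ (i,j) = (\<Sum>l<2. V $$ (i,l) * U $$ (l,j))"
      by (rule index_mult_mat_carrier[OF V U ij])
    also have "\<dots> = (\<Sum>l<2. cnj (f i $ l) * f j $ l)"
      using ij by (intro sum.cong refl) (simp add: U_def V_def)
    also have "\<dots> = 1\<^sub>m 2 $$ (i,j)"
      using f_orth[OF ij] by (simp add: braket_carrier[OF f])
    finally show "(V * U) $$ (i,j) = 1\<^sub>m 2 $$ (i,j)" .
  qed (use U V in auto)
  then have UV: "U * V = 1\<^sub>m 2" by (rule mat_mult_left_right_inverse[OF V U])
  show ?thesis
  proof (rule eq_matI)
    fix i j assume "i < dim_row (1\<^sub>m 2 :: complex mat)" "j < dim_col (1\<^sub>m 2 :: complex mat)"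
    then have ij: "i < 2" "j < 2" by simp_all
    have "(ketbra u + ketbra w) $$ (i,j) = (\<Sum>l<2. U $$ (i,l) * V $$ (l,j))"
      using ij by (simp add: carrier_vecD[OF u] carrier_vecD[OF w] ketbra_index[OF u] ketbra_index[OF w]
          sum_lessThan_2 U_def V_def f_def)
    also have "\<dots> = 1\<^sub>m 2 $$ (i,j)"
      using index_mult_mat_carrier[OF U V ij] UV by simp
    finally show "(ketbra u + ketbra w) $$ (i,j) = 1\<^sub>m 2 $$ (i,j)" .
  qed (use u w in \<open>simp_all add: ketbra_carrier\<close>)
qed

lemma smult_ketbra_add_ketbra_qubit_onb:
  assumes "qubit_onb u w"
  shows "c \<cdot>\<^sub>m ketbra u + c \<cdot>\<^sub>m ketbra w = c \<cdot>\<^sub>m 1\<^sub>m 2"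
  using assms add_smult_distrib_left_mat[OF ketbra_carrier ketbra_carrier, of u 2 w c]
  by (simp add: qubit_onb_def qubit_onb_completeness)

lemma trace_eq_braket_qubit_onb:
  assumes onb: "qubit_onb u w" and K: "K \<in> carrier_mat 2 2"
  shows "trace K = braket u (K *\<^sub>v u) + braket w (K *\<^sub>v w)"
proof -
  have u: "u \<in> carrier_vec 2" and w: "w \<in> carrier_vec 2" using onb by (simp_all add: qubit_onb_def)
  have "K = K * ketbra u + K * ketbra w"
    using qubit_onb_completeness[OF onb] mult_add_distrib_mat[OF K ketbra_carrier[OF u] ketbra_carrier[OF w]] K
    by simp
  from arg_cong[OF this, of trace] show ?thesis
    by (simp add: trace_add[OF mult_carrier_mat[OF K ketbra_carrier[OF u]]
          mult_carrier_mat[OF K ketbra_carrier[OF w]]] trace_mult_ketbra[OF K u] trace_mult_ketbra[OF K w])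
qed

lemma Re_trace_mult_ketbra_le_trace:
  assumes onb: "qubit_onb u w" and N: "psd 2 N"
  shows "Re (trace (N * ketbra u)) \<le> Re (trace N)"
proof -
  have Nc: "N \<in> carrier_mat 2 2" using N by (simp add: psd_def)
  have u: "u \<in> carrier_vec 2" and w: "w \<in> carrier_vec 2" using onb by (simp_all add: qubit_onb_def)
  have "0 \<le> Re (braket w (N *\<^sub>v w))" using N w by (simp add: psd_def)
  then show ?thesis
    using trace_eq_braket_qubit_onb[OF onb Nc] trace_mult_ketbra[OF Nc u] by simp
qed

lemma eq_smult_one_if_eigenbasis:
  assumes onb: "qubit_onb u w" and K: "K \<in> carrier_mat 2 2"
    and Ku: "K *\<^sub>v u = c \<cdot>\<^sub>v u" and Kw: "K *\<^sub>v w = c \<cdot>\<^sub>v w"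
  shows "K = c \<cdot>\<^sub>m 1\<^sub>m 2"
proof -
  have u: "u \<in> carrier_vec 2" and w: "w \<in> carrier_vec 2" using onb by (simp_all add: qubit_onb_def)
  have "K = K * (ketbra u + ketbra w)"
    using qubit_onb_completeness[OF onb] K by simp
  also have "\<dots> = K * ketbra u + K * ketbra w"
    by (rule mult_add_distrib_mat[OF K ketbra_carrier[OF u] ketbra_carrier[OF w]])
  also have "\<dots> = c \<cdot>\<^sub>m ketbra u + c \<cdot>\<^sub>m ketbra w"
    by (simp add: mult_ketbra_eigenvector[OF K u Ku] mult_ketbra_eigenvector[OF K w Kw])
  also have "\<dots> = c \<cdot>\<^sub>m 1\<^sub>m 2"
    by (rule smult_ketbra_add_ketbra_qubit_onb[OF onb])
  finally show ?thesis .
qed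

definition two_qubit_bases :: "(nat \<Rightarrow> complex vec) \<Rightarrow> bool" where
  "two_qubit_bases \<psi> \<longleftrightarrow> qubit_onb (\<psi> 1) (\<psi> 3) \<and> qubit_onb (\<psi> 2) (\<psi> 4)"

definition orth_partner :: "nat \<Rightarrow> nat" where
  "orth_partner x = (x + 1) mod 4 + 1"

lemma orth_partner_simps [simp]:
  "orth_partner 1 = 3" "orth_partner 2 = 4" "orth_partner 3 = 1" "orth_partner 4 = 2"
  by (simp_all add: orth_partner_def)

lemma two_qubit_basesI:
  assumes "\<forall>x\<in>{1..4}. \<psi> x \<in> carrier_vec 2 \<and> braket (\<psi> x) (\<psi> x) = 1"
    and "braket (\<psi> 1) (\<psi> 3) = 0" and "braket (\<psi> 2) (\<psi> 4) = 0"
  shows "two_qubit_bases \<psi>"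
  using assms by (simp add: two_qubit_bases_def qubit_onb_def)

lemma atLeastAtMost_1_4_cases:
  assumes "x \<in> {1..4::nat}"
  obtains "x = 1" | "x = 2" | "x = 3" | "x = 4"
  using assms by fastforce

lemma sum_atLeastAtMost_1_4: "(\<Sum>x\<in>{1..4::nat}. f x) = f 1 + f 2 + f 3 + f 4"
proof -
  have "{1..4::nat} = {1,2,3,4}" by auto
  then show ?thesis by (simp add: add.assoc)
qed

lemma two_qubit_bases_orth_partner:
  assumes \<psi>: "two_qubit_bases \<psi>" and x: "x \<in> {1..4}"
  shows "qubit_onb (\<psi> x) (\<psi> (orth_partner x))"
proof -
  have b13: "qubit_onb (\<psi> 1) (\<psi> 3)" and b24: "qubit_onb (\<psi> 2) (\<psi> 4)"
    using \<psi> by (simp_all add: two_qubit_bases_def)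
  from x show ?thesis
    using b13 b24 qubit_onb_sym[OF b13] qubit_onb_sym[OF b24]
    by (cases rule: atLeastAtMost_1_4_cases) (simp_all only: orth_partner_simps)
qed

lemma two_qubit_bases_carrier:
  "two_qubit_bases \<psi> \<Longrightarrow> x \<in> {1..4} \<Longrightarrow> \<psi> x \<in> carrier_vec 2"
  using two_qubit_bases_orth_partner by (simp add: qubit_onb_def)

definition first_basis_measurement :: "(nat \<Rightarrow> complex vec) \<Rightarrow> nat \<Rightarrow> complex mat" where
  "first_basis_measurement \<psi> x = (if odd x then ketbra (\<psi> x) else 0\<^sub>m 2 2)"

lemma is_povm_first_basis_measurement:
  assumes \<psi>: "two_qubit_bases \<psi>"
  shows "is_povm 2 {1..4} (first_basis_measurement \<psi>)"
  unfolding is_povm_def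
proof (intro conjI ballI)
  show "psd 2 (first_basis_measurement \<psi> x)" if "x \<in> {1..4}" for x
    using psd_ketbra[OF two_qubit_bases_carrier[OF \<psi> that]] psd_zero
    by (simp add: first_basis_measurement_def)
  have b13: "qubit_onb (\<psi> 1) (\<psi> 3)" using \<psi> by (simp add: two_qubit_bases_def)
  then have u: "\<psi> 1 \<in> carrier_vec 2" and w: "\<psi> 3 \<in> carrier_vec 2" by (simp_all add: qubit_onb_def)
  show "mat 2 2 (\<lambda>ij. \<Sum>x\<in>{1..4}. first_basis_measurement \<psi> x $$ ij) = 1\<^sub>m 2"
  proof (rule eq_matI)
    fix i j assume "i < dim_row (1\<^sub>m 2 :: complex mat)" "j < dim_col (1\<^sub>m 2 :: complex mat)"
    then have ij: "i < 2" "j < 2" by simp_all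
    have "(\<Sum>x\<in>{1..4}. first_basis_measurement \<psi> x $$ (i,j)) = (ketbra (\<psi> 1) + ketbra (\<psi> 3)) $$ (i,j)"
      unfolding sum_atLeastAtMost_1_4 using ij
      by (simp add: first_basis_measurement_def carrier_vecD[OF u] carrier_vecD[OF w])
    then show "mat 2 2 (\<lambda>ij. \<Sum>x\<in>{1..4}. first_basis_measurement \<psi> x $$ ij) $$ (i,j) = 1\<^sub>m 2 $$ (i,j)"
      using ij qubit_onb_completeness[OF b13] by simp
  qed simp_all
qed

lemma is_symm_op_quarter_identity:
  assumes \<psi>: "two_qubit_bases \<psi>"
  shows "is_symm_op 2 {1..4} (\<lambda>_. 1/4) (\<lambda>x. ketbra (\<psi> x)) ((1/4) \<cdot>\<^sub>m 1\<^sub>m 2)"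
proof -
  define \<sigma> where "\<sigma> x = ketbra (\<psi> (orth_partner x))" for x
  define M where "M = first_basis_measurement \<psi>"
  have decomp: "density 2 (\<sigma> x) \<and>
      (1/4) \<cdot>\<^sub>m 1\<^sub>m 2 = complex_of_real (1/4) \<cdot>\<^sub>m ketbra (\<psi> x) + complex_of_real (1/4) \<cdot>\<^sub>m \<sigma> x \<and>
      complex_of_real (1/4) * trace (M x * \<sigma> x) = 0" if x: "x \<in> {1..4}" for x
  proof (intro conjI)
    have onb: "qubit_onb (\<psi> x) (\<psi> (orth_partner x))" by (rule two_qubit_bases_orth_partner[OF \<psi> x])
    then have u: "\<psi> x \<in> carrier_vec 2" and w: "\<psi> (orth_partner x) \<in> carrier_vec 2"
      and ww: "braket (\<psi> (orth_partner x)) (\<psi> (orth_partner x)) = 1"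
      and uw: "braket (\<psi> x) (\<psi> (orth_partner x)) = 0"
      by (simp_all add: qubit_onb_def)
    show "density 2 (\<sigma> x)" unfolding \<sigma>_def by (rule density_ketbra[OF w ww])
    show "(1/4) \<cdot>\<^sub>m 1\<^sub>m 2 = complex_of_real (1/4) \<cdot>\<^sub>m ketbra (\<psi> x) + complex_of_real (1/4) \<cdot>\<^sub>m \<sigma> x"
      using smult_ketbra_add_ketbra_qubit_onb[OF onb, of "1/4"] by (simp add: \<sigma>_def)
    show "complex_of_real (1/4) * trace (M x * \<sigma> x) = 0"
      using uw by (simp add: M_def \<sigma>_def first_basis_measurement_def trace_ketbra_mult_ketbra[OF u w]
          left_mult_zero_mat[OF ketbra_carrier[OF w]] trace_carrier[of _ 2])
  qed
  have M: "is_povm 2 {1..4} M"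
    unfolding M_def by (rule is_povm_first_basis_measurement[OF \<psi>])
  have herm: "hermitian ((1/4) \<cdot>\<^sub>m 1\<^sub>m 2)"
    by (simp add: hermitian_iff_index[of _ 2])
  show ?thesis
    unfolding is_symm_op_def
    by (intro conjI; (rule exI[of _ "\<lambda>_::nat. 1/4 :: real"], rule exI[of _ \<sigma>], rule exI[of _ M])?)
      (use decomp M herm in auto)
qed

lemma success_le_half:
  assumes \<psi>: "two_qubit_bases \<psi>" and N: "is_povm 2 {1..4} N"
  shows "Re (\<Sum>x\<in>{1..4}. complex_of_real (1/4) * trace (N x * ketbra (\<psi> x))) \<le> 1/2"
proof -
  have "Re (trace (N x * ketbra (\<psi> x))) \<le> Re (trace (N x))" if x: "x \<in> {1..4}" for x
    using Re_trace_mult_ketbra_le_trace[OF two_qubit_bases_orth_partner[OF \<psi> x]] N x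
    by (simp add: is_povm_def)
  then have "Re (\<Sum>x\<in>{1..4}. complex_of_real (1/4) * trace (N x * ketbra (\<psi> x)))
      \<le> 1/4 * Re (\<Sum>x\<in>{1..4}. trace (N x))"
    by (auto simp: Re_sum sum_distrib_left intro!: sum_mono divide_right_mono)
  also have "(\<Sum>x\<in>{1..4}. trace (N x)) = (\<Sum>x\<in>{1..4}. trace (N x * 1\<^sub>m 2))"
    by (intro sum.cong refl) (simp add: right_mult_one_mat[OF povm_carrier[OF N]])
  also have "\<dots> = trace (1\<^sub>m 2)"
    by (rule povm_sum_trace_mult[OF N one_carrier_mat])
  also have "trace (1\<^sub>m 2) = 2"
    by (simp add: trace_carrier[of _ 2])
  finally show ?thesis by simp
qed

lemma is_symm_op_unique:
  assumes \<psi>: "two_qubit_bases \<psi>" and K: "is_symm_op 2 {1..4} (\<lambda>_. 1/4) (\<lambda>x. ketbra (\<psi> x)) K"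
  shows "K = (1/4) \<cdot>\<^sub>m 1\<^sub>m 2"
proof -
  define c :: complex where "c = 1/4"
  have Kc: "K \<in> carrier_mat 2 2" using K by (simp add: is_symm_op_def)
  have onb: "qubit_onb (\<psi> 1) (\<psi> 3)" using \<psi> by (simp add: two_qubit_bases_def)
  then have u: "\<psi> 1 \<in> carrier_vec 2" and w: "\<psi> 3 \<in> carrier_vec 2"
    and uu: "braket (\<psi> 1) (\<psi> 1) = 1" and ww: "braket (\<psi> 3) (\<psi> 3) = 1"
    by (simp_all add: qubit_onb_def)
  obtain M where M: "is_povm 2 {1..4} M"
    and trK: "trace K = (\<Sum>x\<in>{1..4}. complex_of_real (1/4) * trace (M x * ketbra (\<psi> x)))"
    using is_symm_op_trace[OF K] ketbra_carrier two_qubit_bases_carrier[OF \<psi>] by blast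
  have trK_le: "Re (trace K) \<le> 1/2" using success_le_half[OF \<psi> M] trK by simp
  obtain P1 where P1: "psd 2 P1" and K1: "K = c \<cdot>\<^sub>m ketbra (\<psi> 1) + P1"
    using is_symm_op_decomp[OF K, of 1] by (auto simp: c_def)
  obtain P3 where P3: "psd 2 P3" and K3: "K = c \<cdot>\<^sub>m ketbra (\<psi> 3) + P3"
    using is_symm_op_decomp[OF K, of 3] by (auto simp: c_def)
  have P1c: "P1 \<in> carrier_mat 2 2" and P3c: "P3 \<in> carrier_mat 2 2"
    using P1 P3 by (simp_all add: psd_def)
  note Ku = smult_ketbra_add_mult_vec[OF u uu P1c, of c, folded K1]
  note Kw = smult_ketbra_add_mult_vec[OF w ww P3c, of c, folded K3]
  have "trace K = braket (\<psi> 1) (K *\<^sub>v \<psi> 1) + braket (\<psi> 3) (K *\<^sub>v \<psi> 3)"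
    by (rule trace_eq_braket_qubit_onb[OF onb Kc])
  also have "\<dots> = 2 * c + braket (\<psi> 1) (P1 *\<^sub>v \<psi> 1) + braket (\<psi> 3) (P3 *\<^sub>v \<psi> 3)"
    unfolding Ku Kw using u w uu ww P1c P3c by (simp add: braket_add_right braket_smult_right)
  finally have "Re (trace K) = 1/2 + Re (braket (\<psi> 1) (P1 *\<^sub>v \<psi> 1)) + Re (braket (\<psi> 3) (P3 *\<^sub>v \<psi> 3))"
    by (simp add: c_def)
  moreover have "0 \<le> Re (braket (\<psi> 1) (P1 *\<^sub>v \<psi> 1))" "0 \<le> Re (braket (\<psi> 3) (P3 *\<^sub>v \<psi> 3))"
    using P1 P3 u w by (simp_all add: psd_def)
  ultimately have "Re (braket (\<psi> 1) (P1 *\<^sub>v \<psi> 1)) \<le> 0" "Re (braket (\<psi> 3) (P3 *\<^sub>v \<psi> 3)) \<le> 0"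
    using trK_le by linarith+
  then have "P1 *\<^sub>v \<psi> 1 = 0\<^sub>v 2" "P3 *\<^sub>v \<psi> 3 = 0\<^sub>v 2"
    using psd_kernel P1 P3 u w by blast+
  then have "K *\<^sub>v \<psi> 1 = c \<cdot>\<^sub>v \<psi> 1" "K *\<^sub>v \<psi> 3 = c \<cdot>\<^sub>v \<psi> 3"
    using Ku Kw u w by simp_all
  then show ?thesis
    using eq_smult_one_if_eigenbasis[OF onb Kc] by (simp add: c_def)
qed

lemma symm_op_eq_quarter_identity:
  assumes \<psi>: "two_qubit_bases \<psi>"
  shows "symm_op 2 {1..4} (\<lambda>_. 1/4) (\<lambda>x. ketbra (\<psi> x)) = (1/4) \<cdot>\<^sub>m 1\<^sub>m 2"
  unfolding symm_op_def
  using is_symm_op_quarter_identity[OF \<psi>] is_symm_op_unique[OF \<psi>] by (rule the_equality)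

lemma trace_quarter_identity: "trace ((1/4) \<cdot>\<^sub>m 1\<^sub>m 2) = 1/2"
  by (simp add: trace_carrier[of _ 2])

lemma pguess_eq_half:
  assumes \<psi>: "two_qubit_bases \<psi>"
  shows "pguess 2 {1..4} (\<lambda>_. 1/4) (\<lambda>x. ketbra (\<psi> x)) = 1/2"
  unfolding pguess_def
proof (rule cSup_eq_maximum)
  obtain M where M: "is_povm 2 {1..4} M"
    and tr: "trace ((1/4) \<cdot>\<^sub>m 1\<^sub>m 2) = (\<Sum>x\<in>{1..4}. complex_of_real (1/4) * trace (M x * ketbra (\<psi> x)))"
    using is_symm_op_trace[OF is_symm_op_quarter_identity[OF \<psi>]] ketbra_carrier two_qubit_bases_carrier[OF \<psi>]
    by blast
  from tr have half: "Re (\<Sum>x\<in>{1..4}. complex_of_real (1/4) * trace (M x * ketbra (\<psi> x))) = 1/2"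
    unfolding trace_quarter_identity by (metis Re_divide_numeral one_complex.sel)
  show "1/2 \<in> {Re (\<Sum>x\<in>{1..4}. complex_of_real ((\<lambda>_. 1/4) x) * trace (M x * ketbra (\<psi> x))) | M. is_povm 2 {1..4} M}"
    by (rule CollectI, rule exI[of _ M]) (simp only: M half)
qed (use success_le_half[OF \<psi>] in auto)

lemma mat_adjoint_one: "mat_adjoint (1\<^sub>m n :: complex mat) = 1\<^sub>m n"
  using mat_adjoint_carrier[OF one_carrier_mat[of n]]
  by (intro eq_matI) (auto simp: mat_adjoint_index[OF one_carrier_mat])

lemma unitary_one: "unitary n (1\<^sub>m n)"
  by (simp add: unitary_def mat_adjoint_one)

theorem mainTheorem7:
  fixes \<psi> \<phi> :: "nat \<Rightarrow> complex vec"
  assumes "\<forall>x\<in>{1..4}. \<psi> x \<in> carrier_vec 2 \<and> braket (\<psi> x) (\<psi> x) = 1"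
      and "braket (\<psi> 1) (\<psi> 3) = 0" and "braket (\<psi> 2) (\<psi> 4) = 0"
      and "\<forall>x\<in>{1..4}. \<phi> x \<in> carrier_vec 2 \<and> braket (\<phi> x) (\<phi> x) = 1"
      and "braket (\<phi> 1) (\<phi> 3) = 0" and "braket (\<phi> 2) (\<phi> 4) = 0"
  shows "is_symm_op 2 {1..4} (\<lambda>_. 1/4) (\<lambda>x. ketbra (\<psi> x)) ((1/4) \<cdot>\<^sub>m 1\<^sub>m 2)
       \<and> (\<forall>K. is_symm_op 2 {1..4} (\<lambda>_. 1/4) (\<lambda>x. ketbra (\<psi> x)) K \<longrightarrow> K = (1/4) \<cdot>\<^sub>m 1\<^sub>m 2)
       \<and> symm_op 2 {1..4} (\<lambda>_. 1/4) (\<lambda>x. ketbra (\<psi> x)) = (1/4) \<cdot>\<^sub>m 1\<^sub>m 2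
       \<and> ens_equiv 2 {1..4} (\<lambda>_. 1/4) (\<lambda>x. ketbra (\<psi> x)) {1..4} (\<lambda>_. 1/4) (\<lambda>x. ketbra (\<phi> x))
       \<and> pguess 2 {1..4} (\<lambda>_. 1/4) (\<lambda>x. ketbra (\<psi> x)) = 1/2
       \<and> trace (symm_op 2 {1..4} (\<lambda>_. 1/4) (\<lambda>x. ketbra (\<psi> x))) = 1/2"
proof -
  have \<psi>: "two_qubit_bases \<psi>" using assms(1-3) by (rule two_qubit_basesI)
  have \<phi>: "two_qubit_bases \<phi>" using assms(4-6) by (rule two_qubit_basesI)
  show ?thesis
  proof (intro conjI allI impI)
    show "is_symm_op 2 {1..4} (\<lambda>_. 1/4) (\<lambda>x. ketbra (\<psi> x)) ((1/4) \<cdot>\<^sub>m 1\<^sub>m 2)"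
      by (rule is_symm_op_quarter_identity[OF \<psi>])
    show "K = (1/4) \<cdot>\<^sub>m 1\<^sub>m 2" if "is_symm_op 2 {1..4} (\<lambda>_. 1/4) (\<lambda>x. ketbra (\<psi> x)) K" for K
      using is_symm_op_unique[OF \<psi> that] .
    show "symm_op 2 {1..4} (\<lambda>_. 1/4) (\<lambda>x. ketbra (\<psi> x)) = (1/4) \<cdot>\<^sub>m 1\<^sub>m 2"
      by (rule symm_op_eq_quarter_identity[OF \<psi>])
    show "ens_equiv 2 {1..4} (\<lambda>_. 1/4) (\<lambda>x. ketbra (\<psi> x)) {1..4} (\<lambda>_. 1/4) (\<lambda>x. ketbra (\<phi> x))"
      unfolding ens_equiv_def symm_op_eq_quarter_identity[OF \<psi>] symm_op_eq_quarter_identity[OF \<phi>]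
      by (rule exI[of _ "1\<^sub>m 2"]) (simp add: unitary_one mat_adjoint_one)
    show "pguess 2 {1..4} (\<lambda>_. 1/4) (\<lambda>x. ketbra (\<psi> x)) = 1/2"
      by (rule pguess_eq_half[OF \<psi>])
    show "trace (symm_op 2 {1..4} (\<lambda>_. 1/4) (\<lambda>x. ketbra (\<psi> x))) = 1/2"
      unfolding symm_op_eq_quarter_identity[OF \<psi>] by (rule trace_quarter_identity)
  qed
qed

end
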